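(* Let $T=\{0,\dots,N\}$, let $M_\bullet$ and $P_\bullet$ be filtrations of finite-dimensional vector spaces $M=M_N$ and $P=P_N$ over a field $\mathbb{F}$ indexed by $T$, and let $\phi_\bullet\colon M_\bullet\to P_\bullet$ be a morphism of filtrations, i.e. a linear map $\phi\colon M\to P$ with $\phi(M_t)\subseteq P_t$ for all $t$ and $\phi_t=\phi|_{M_t}\colon M_t\to P_t$. Let $\mathfrak{M}$ be a filtration compatible basis for $M_\bullet$, let $\mathfrak{M}'=\mathfrak{M}\cap\ker\phi$, and assume that $\mathfrak{M}''=(\phi(m))_{m\in\mathfrak{M}\setminus\mathfrak{M}'}$ is a linearly independent family of vectors. Then $\mathfrak{M}'$ is a filtration compatible basis for the filtration $\ker\phi_\bullet$ (with $(\ker\phi_\bullet)_t=\ker\phi_t$), and $\mathfrak{M}''$ is a filtration compatible basis for the filtration $\operatorname{im}\phi_\bullet$ (with $(\operatorname{im}\phi_\bullet)_t=\operatorname{im}\phi_t$). Moreover, \[ \operatorname{supp}_{\ker\phi_\bullet}(m')=\operatorname{supp}_{M_\bullet}(m')\quad\text{and}\quad\operatorname{supp}_{\operatorname{im}\phi_\bullet}(\phi(m))=\operatorname{supp}_{M_\bullet}(m) \] for all $m'\in\mathfrak{M}'$ and all $m\in\mathfrak{M}\setminus\mathfrak{M}'$.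
   Context: A filtration of a vector space $M$ indexed by $T=\{0,\dots,N\}$ is a family of subspaces $M_0\subseteq\dots\subseteq M_N=M$, with structure maps the inclusions. For $m\in M$, its support is $\operatorname{supp}_{M_\bullet}(m)=\{t\in T\mid m\in M_t\}$. A basis $\mathfrak{M}$ of $M$ is filtration compatible if $\mathfrak{M}\cap M_t$ is a basis of $M_t$ for every $t\in T$ (for a family of vectors, this is understood in the same way, the family being a basis of $M$). *)

theory Defs
  imports Complex_Main
begin

text \<open>Vector spaces over a field are given by scalar multiplications
  s :: 'a::field => 'v => 'v satisfying the library locale vector_space.
  A filtration indexed by T = {0..N} is a family F :: nat => 'v set of
  subspaces, monotone on {0..N}; the ambient space is F N.\<close>

definition filtration :: "('a::field \<Rightarrow> 'v::ab_group_add \<Rightarrow> 'v) \<Rightarrow> nat \<Rightarrow> (nat \<Rightarrow> 'v set) \<Rightarrow> bool" where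
  "filtration s N F \<longleftrightarrow>
     (\<forall>t\<le>N. module.subspace s (F t)) \<and> (\<forall>t t'. t \<le> t' \<and> t' \<le> N \<longrightarrow> F t \<subseteq> F t')"

definition fin_dim :: "('a::field \<Rightarrow> 'v::ab_group_add \<Rightarrow> 'v) \<Rightarrow> 'v set \<Rightarrow> bool" where
  "fin_dim s V \<longleftrightarrow> (\<exists>B. finite B \<and> B \<subseteq> V \<and> \<not> module.dependent s B \<and> module.span s B = V)"

definition is_basis_of :: "('a::field \<Rightarrow> 'v::ab_group_add \<Rightarrow> 'v) \<Rightarrow> 'v set \<Rightarrow> 'v set \<Rightarrow> bool" where
  "is_basis_of s B V \<longleftrightarrow> B \<subseteq> V \<and> \<not> module.dependent s B \<and> module.span s B = V"

definition filt_compat_basis :: "('a::field \<Rightarrow> 'v::ab_group_add \<Rightarrow> 'v) \<Rightarrow> nat \<Rightarrow> (nat \<Rightarrow> 'v set) \<Rightarrow> 'v set \<Rightarrow> bool" where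
  "filt_compat_basis s N F B \<longleftrightarrow> is_basis_of s B (F N) \<and> (\<forall>t\<le>N. is_basis_of s (B \<inter> F t) (F t))"

definition lin_indep_family :: "('a::field \<Rightarrow> 'v::ab_group_add \<Rightarrow> 'v) \<Rightarrow> 'i set \<Rightarrow> ('i \<Rightarrow> 'v) \<Rightarrow> bool" where
  "lin_indep_family s I v \<longleftrightarrow> inj_on v I \<and> \<not> module.dependent s (v ` I)"

definition is_basis_family_of :: "('a::field \<Rightarrow> 'v::ab_group_add \<Rightarrow> 'v) \<Rightarrow> 'i set \<Rightarrow> ('i \<Rightarrow> 'v) \<Rightarrow> 'v set \<Rightarrow> bool" where
  "is_basis_family_of s I v V \<longleftrightarrow> lin_indep_family s I v \<and> v ` I \<subseteq> V \<and> module.span s (v ` I) = V"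

definition filt_compat_basis_family :: "('a::field \<Rightarrow> 'v::ab_group_add \<Rightarrow> 'v) \<Rightarrow> nat \<Rightarrow> (nat \<Rightarrow> 'v set) \<Rightarrow> 'i set \<Rightarrow> ('i \<Rightarrow> 'v) \<Rightarrow> bool" where
  "filt_compat_basis_family s N F I v \<longleftrightarrow>
     is_basis_family_of s I v (F N) \<and> (\<forall>t\<le>N. is_basis_family_of s {i\<in>I. v i \<in> F t} v (F t))"

definition supp :: "nat \<Rightarrow> (nat \<Rightarrow> 'v set) \<Rightarrow> 'v \<Rightarrow> nat set" where
  "supp N F m = {t. t \<le> N \<and> m \<in> F t}"

definition ker_filt :: "(nat \<Rightarrow> 'v set) \<Rightarrow> ('v \<Rightarrow> 'w::zero) \<Rightarrow> nat \<Rightarrow> 'v set" where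
  "ker_filt F \<phi> t = {m \<in> F t. \<phi> m = 0}"

definition im_filt :: "(nat \<Rightarrow> 'v set) \<Rightarrow> ('v \<Rightarrow> 'w) \<Rightarrow> nat \<Rightarrow> 'w set" where
  "im_filt F \<phi> t = \<phi> ` F t"

end

theory Submission
  imports Defs
begin

text \<open>Split the basis into its kernel part and the rest. Every vector of the span of the
  basis is a sum of a vector killed by \<open>\<phi>\<close> and a vector of the span of the rest, on which
  \<open>\<phi>\<close> is injective because the images of the rest are independent. Hence the kernel is spanned
  by the kernel part and the image by the images of the rest. Independence of these images
  also forces a basis vector whose image lies in \<open>\<phi>(M\<^sub>t)\<close> to lie in \<open>M\<^sub>t\<close> itself: otherwise its
  image would be a combination of the images of the other basis vectors of \<open>M\<^sub>t\<close>.\<close>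

lemma filt_compat_basisI:
  assumes "B \<subseteq> F N" and "\<And>t. t \<le> N \<Longrightarrow> is_basis_of s (B \<inter> F t) (F t)"
  shows "filt_compat_basis s N F B"
proof -
  have "B \<inter> F N = B" using assms(1) by auto
  then show ?thesis using assms(2)[of N] assms(2) unfolding filt_compat_basis_def by simp
qed

lemma filt_compat_basis_familyI:
  assumes "v ` I \<subseteq> F N" and "\<And>t. t \<le> N \<Longrightarrow> is_basis_family_of s {i\<in>I. v i \<in> F t} v (F t)"
  shows "filt_compat_basis_family s N F I v"
proof -
  have "{i\<in>I. v i \<in> F N} = I" using assms(1) by auto
  then show ?thesis using assms(2)[of N] assms(2) unfolding filt_compat_basis_family_def by simp
qed

context module_hom
begin

lemma in_span_kernel_part:
  assumes inj: "inj_on f (B - {b. f b = 0})"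
    and indep: "m2.independent (f ` (B - {b. f b = 0}))"
    and v: "v \<in> m1.span B" "f v = 0"
  shows "v \<in> m1.span (B \<inter> {b. f b = 0})"
proof -
  have "(B \<inter> {b. f b = 0}) \<union> (B - {b. f b = 0}) = B" by auto
  with v(1) have "v \<in> m1.span ((B \<inter> {b. f b = 0}) \<union> (B - {b. f b = 0}))" by simp
  then obtain a r where ar: "v = a + r" "a \<in> m1.span (B \<inter> {b. f b = 0})"
      "r \<in> m1.span (B - {b. f b = 0})"
    unfolding m1.span_Un by blast
  have "f a = 0" by (rule eq_0_on_span[OF _ ar(2)]) auto
  then have "f r = 0" using v(2) ar(1) add by simp
  moreover have "inj_on f (m1.span (B - {b. f b = 0}))"
    using inj_on_span_independent_image[OF indep inj] .
  ultimately have "r = 0"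
    using ar(3) inj_on_iff_eq_0[OF m1.subspace_span] by blast
  then show ?thesis using ar by simp
qed

end

context Vector_Spaces.linear
begin

lemma span_image_nonkernel_part: "vs2.span (f ` (B - {b. f b = 0})) = f ` vs1.span B"
proof -
  have "insert 0 (f ` (B - {b. f b = 0})) = insert 0 (f ` B)" by auto
  then have "vs2.span (f ` (B - {b. f b = 0})) = vs2.span (f ` B)"
    using vs2.span_insert_0 by metis
  then show ?thesis by (simp add: span_image)
qed

lemma mem_if_image_mem_image_span:
  assumes inj: "inj_on f (B - {b. f b = 0})"
    and indep: "vs2.independent (f ` (B - {b. f b = 0}))"
    and "A \<subseteq> B" and x: "x \<in> B" "f x \<noteq> 0" and fx: "f x \<in> f ` vs1.span A"
  shows "x \<in> A"
proof -
  have in_span: "f x \<in> vs2.span (f ` (A - {b. f b = 0}))"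
    unfolding span_image_nonkernel_part by (rule fx)
  have "insert (f x) (f ` (A - {b. f b = 0})) \<subseteq> f ` (B - {b. f b = 0})"
    using \<open>A \<subseteq> B\<close> x by auto
  then have indep_insert: "vs2.independent (insert (f x) (f ` (A - {b. f b = 0})))"
    by (rule vs2.independent_mono[OF indep])
  have "f x \<in> f ` (A - {b. f b = 0})"
  proof (rule ccontr)
    assume "f x \<notin> f ` (A - {b. f b = 0})"
    then have "f x \<notin> vs2.span (f ` (A - {b. f b = 0}))"
      using indep_insert vs2.independent_insert by simp
    with in_span show False by contradiction
  qed
  then obtain a where a: "f x = f a" "a \<in> A - {b. f b = 0}" by (rule imageE)
  have "a = x"
    by (rule inj_onD[OF inj a(1)[symmetric]]) (use a x \<open>A \<subseteq> B\<close> in auto)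
  with a show ?thesis by simp
qed

lemma is_basis_of_kernel_part:
  assumes basis: "is_basis_of s1 B V"
    and inj: "inj_on f (B - {b. f b = 0})" and indep: "vs2.independent (f ` (B - {b. f b = 0}))"
  shows "is_basis_of s1 (B \<inter> {b. f b = 0}) {v \<in> V. f v = 0}"
proof -
  have span_B: "vs1.span B = V" and "vs1.independent B"
    using basis by (auto simp: is_basis_of_def)
  have "vs1.span (B \<inter> {b. f b = 0}) = {v \<in> V. f v = 0}"
  proof (intro equalityI subsetI)
    fix v assume v: "v \<in> vs1.span (B \<inter> {b. f b = 0})"
    have "v \<in> V" using vs1.span_mono[of "B \<inter> {b. f b = 0}" B] v span_B by blast
    moreover have "f v = 0" by (rule eq_0_on_span[OF _ v]) simp
    ultimately show "v \<in> {v \<in> V. f v = 0}" by simp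
  next
    fix v assume "v \<in> {v \<in> V. f v = 0}"
    then show "v \<in> vs1.span (B \<inter> {b. f b = 0})"
      using in_span_kernel_part[OF inj indep] span_B by simp
  qed
  moreover have "vs1.independent (B \<inter> {b. f b = 0})"
    using vs1.independent_mono[OF \<open>vs1.independent B\<close>] by blast
  moreover have "B \<inter> {b. f b = 0} \<subseteq> {v \<in> V. f v = 0}"
    using basis by (auto simp: is_basis_of_def)
  ultimately show ?thesis
    unfolding is_basis_of_def by blast
qed

lemma is_basis_family_of_nonkernel_part:
  assumes basis: "is_basis_of s1 B V"
    and "inj_on f (B - {b. f b = 0})" "vs2.independent (f ` (B - {b. f b = 0}))"
  shows "is_basis_family_of s2 (B - {b. f b = 0}) f (f ` V)"
proof -
  have "B \<subseteq> V" and "vs1.span B = V"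
    using basis by (auto simp: is_basis_of_def)
  then have "f ` (B - {b. f b = 0}) \<subseteq> f ` V" and "vs2.span (f ` (B - {b. f b = 0})) = f ` V"
    using span_image_nonkernel_part[of B] by auto
  with assms(2,3) show ?thesis
    unfolding is_basis_family_of_def lin_indep_family_def by blast
qed

lemma nonkernel_part_subset:
  assumes "A \<subseteq> B"
    and inj: "inj_on f (B - {b. f b = 0})" and indep: "vs2.independent (f ` (B - {b. f b = 0}))"
  shows "inj_on f (A - {b. f b = 0})" and "vs2.independent (f ` (A - {b. f b = 0}))"
proof -
  have sub: "A - {b. f b = 0} \<subseteq> B - {b. f b = 0}" using assms(1) by blast
  show "inj_on f (A - {b. f b = 0})" by (rule inj_on_subset[OF inj sub])
  show "vs2.independent (f ` (A - {b. f b = 0}))" by (rule vs2.independent_mono[OF indep image_mono[OF sub]])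
qed

lemma filt_compat_basis_ker_filt:
  assumes basis: "filt_compat_basis s1 N F B"
    and inj: "inj_on f (B - {b. f b = 0})" and indep: "vs2.independent (f ` (B - {b. f b = 0}))"
  shows "filt_compat_basis s1 N (ker_filt F f) (B \<inter> {b. f b = 0})"
proof (rule filt_compat_basisI)
  show "B \<inter> {b. f b = 0} \<subseteq> ker_filt F f N"
    using basis by (auto simp: filt_compat_basis_def is_basis_of_def ker_filt_def)
  fix t assume "t \<le> N"
  then have "is_basis_of s1 (B \<inter> F t) (F t)"
    using basis by (simp add: filt_compat_basis_def)
  then have "is_basis_of s1 (B \<inter> F t \<inter> {b. f b = 0}) {v \<in> F t. f v = 0}"
    using is_basis_of_kernel_part nonkernel_part_subset[OF _ inj indep] by blast
  moreover have "B \<inter> {b. f b = 0} \<inter> ker_filt F f t = B \<inter> F t \<inter> {b. f b = 0}"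
    by (auto simp: ker_filt_def)
  ultimately show "is_basis_of s1 (B \<inter> {b. f b = 0} \<inter> ker_filt F f t) (ker_filt F f t)"
    by (simp add: ker_filt_def)
qed

lemma image_mem_im_filt_iff:
  assumes basis: "filt_compat_basis s1 N F B"
    and inj: "inj_on f (B - {b. f b = 0})" and indep: "vs2.independent (f ` (B - {b. f b = 0}))"
    and x: "x \<in> B" "f x \<noteq> 0" and "t \<le> N"
  shows "f x \<in> im_filt F f t \<longleftrightarrow> x \<in> F t"
proof
  assume "f x \<in> im_filt F f t"
  then have "f x \<in> f ` vs1.span (B \<inter> F t)"
    using basis \<open>t \<le> N\<close> unfolding filt_compat_basis_def is_basis_of_def im_filt_def by simp
  then show "x \<in> F t"
    using mem_if_image_mem_image_span[OF inj indep, of "B \<inter> F t" x] x by blast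
qed (simp add: im_filt_def)

lemma supp_im_filt_image:
  assumes "filt_compat_basis s1 N F B"
    and "inj_on f (B - {b. f b = 0})" "vs2.independent (f ` (B - {b. f b = 0}))"
    and "x \<in> B" "f x \<noteq> 0"
  shows "supp N (im_filt F f) (f x) = supp N F x"
  using image_mem_im_filt_iff[OF assms] by (auto simp: supp_def)

lemma filt_compat_basis_family_im_filt:
  assumes basis: "filt_compat_basis s1 N F B"
    and inj: "inj_on f (B - {b. f b = 0})" and indep: "vs2.independent (f ` (B - {b. f b = 0}))"
  shows "filt_compat_basis_family s2 N (im_filt F f) (B - {b. f b = 0}) f"
proof (rule filt_compat_basis_familyI)
  show "f ` (B - {b. f b = 0}) \<subseteq> im_filt F f N"
    using basis by (auto simp: filt_compat_basis_def is_basis_of_def im_filt_def)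
  fix t assume "t \<le> N"
  then have "is_basis_of s1 (B \<inter> F t) (F t)"
    using basis by (simp add: filt_compat_basis_def)
  then have "is_basis_family_of s2 (B \<inter> F t - {b. f b = 0}) f (f ` F t)"
    using is_basis_family_of_nonkernel_part nonkernel_part_subset[OF _ inj indep] by blast
  moreover have "{x \<in> B - {b. f b = 0}. f x \<in> im_filt F f t} = B \<inter> F t - {b. f b = 0}"
    using image_mem_im_filt_iff[OF basis inj indep _ _ \<open>t \<le> N\<close>] by blast
  ultimately show "is_basis_family_of s2 {x \<in> B - {b. f b = 0}. f x \<in> im_filt F f t} f (im_filt F f t)"
    by (simp add: im_filt_def)
qed

end

theorem lemma2p7:
  fixes sM :: "'a::field \<Rightarrow> 'm::ab_group_add \<Rightarrow> 'm"
    and sP :: "'a \<Rightarrow> 'p::ab_group_add \<Rightarrow> 'p"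
    and N :: nat
    and M :: "nat \<Rightarrow> 'm set" and P :: "nat \<Rightarrow> 'p set"
    and \<phi> :: "'m \<Rightarrow> 'p"
    and \<MM> :: "'m set"
  assumes vsM: "vector_space sM" and vsP: "vector_space sP"
    and filtM: "filtration sM N M" and filtP: "filtration sP N P"
    and fdM: "fin_dim sM (M N)" and fdP: "fin_dim sP (P N)"
    and lin: "Vector_Spaces.linear sM sP \<phi>"
    and morph: "\<forall>t\<le>N. \<phi> ` M t \<subseteq> P t"
    and basis: "filt_compat_basis sM N M \<MM>"
    and indep: "lin_indep_family sP (\<MM> - {m. \<phi> m = 0}) \<phi>"
  shows "filt_compat_basis sM N (ker_filt M \<phi>) (\<MM> \<inter> {m. \<phi> m = 0})
    \<and> filt_compat_basis_family sP N (im_filt M \<phi>) (\<MM> - {m. \<phi> m = 0}) \<phi>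
    \<and> (\<forall>m'\<in>\<MM> \<inter> {m. \<phi> m = 0}. supp N (ker_filt M \<phi>) m' = supp N M m')
    \<and> (\<forall>m\<in>\<MM> - {m. \<phi> m = 0}. supp N (im_filt M \<phi>) (\<phi> m) = supp N M m)"
proof -
  interpret Vector_Spaces.linear sM sP \<phi> by (rule lin)
  have inj: "inj_on \<phi> (\<MM> - {m. \<phi> m = 0})" and indep_image: "vs2.independent (\<phi> ` (\<MM> - {m. \<phi> m = 0}))"
    using indep unfolding lin_indep_family_def by blast+
  have "\<forall>m'\<in>\<MM> \<inter> {m. \<phi> m = 0}. supp N (ker_filt M \<phi>) m' = supp N M m'"
    by (auto simp: supp_def ker_filt_def)
  then show ?thesis
    using filt_compat_basis_ker_filt[OF basis inj indep_image] filt_compat_basis_family_im_filt[OF basis inj indep_image]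
      supp_im_filt_image[OF basis inj indep_image] by blast
qed

end
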